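(* Assume conditions (i), (ii) and (iv) of Assumption A. Then the stationary distribution $\pi$ and the measure $x^3\pi(dx)$ both have bounded Lebesgue densities on $\mathbb{R}$ (and in particular $x^2\pi(dx)$ has a bounded Lebesgue density as well).
   Context: Model: Let $\lambda>0$. Let $J_t=\sum_{j=1}^{N_t}U_j$ be a compound Poisson process with Poisson intensity $\alpha>0$ and i.i.d. positive jumps with distribution $F$; its Lévy measure is $\nu=\alpha F$. $X$ is the stationary solution of $dX_t=-\lambda X_tdt+dJ_{\lambda t}$, with stationary distribution $\pi$ having characteristic function $\varphi(t)=\exp\big(\int_0^\infty(e^{itx}-1)\frac{k(x)}{x}dx\big)$, where $k(x)=\nu((x,\infty))$ for $x\ge0$ and $k(x)=0$ for $x<0$. $\varphi_k(u)=\int_0^\infty e^{iux}k(x)dx$. Conditions: (i) $\int_0^\infty(1\vee|x|^{2+\epsilon})k(x)dx<\infty$ for some $\epsilon>0$. (ii) $k(0)=\alpha$ with $2<\alpha<\infty$. (iv) $|\varphi_k(u)|\lesssim(1+|u|)^{-1}$ and $|\varphi_k'(u)|\vee|\varphi_k''(u)|\lesssim(1+|u|)^{-2}$. *)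

theory Defs
  imports "HOL-Probability.Probability"
begin

text \<open>Tail function of the Levy measure nu = alpha F:
  k(x) = nu((x,infinity)) for x >= 0 and k(x) = 0 for x < 0.\<close>
definition tailk :: "real \<Rightarrow> real measure \<Rightarrow> real \<Rightarrow> real" where
  "tailk \<alpha> F x = (if 0 \<le> x then \<alpha> * measure F {x<..} else 0)"

definition phik :: "real \<Rightarrow> real measure \<Rightarrow> real \<Rightarrow> complex" where
  "phik \<alpha> F u = set_lebesgue_integral lborel {0..}
      (\<lambda>x. iexp (u * x) * complex_of_real (tailk \<alpha> F x))"

definition phipi :: "real \<Rightarrow> real measure \<Rightarrow> real \<Rightarrow> complex" where
  "phipi \<alpha> F t = exp (set_lebesgue_integral lborel {0<..}
      (\<lambda>x. (iexp (t * x) - 1) * complex_of_real (tailk \<alpha> F x / x)))"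

end

theory Submission
  imports Defs
begin

text \<open>Since \<open>k(0) = \<alpha> > 2\<close>, the Levy exponent satisfies
  \<open>Re \<psi>(t) = -\<integral> (1 - cos tx) k(x)/x dx \<le> 2 - 2 ln |t| + O(1)\<close>, so \<open>|\<phi>(t)| = O(1/t\<^sup>2)\<close>.
  Moment conditions up to order two make \<open>\<phi> = exp \<psi>\<close> three times differentiable, each derivative
  being \<open>\<phi>\<close> times a polynomial in the transforms \<open>\<integral> e\<^sup>i\<^sup>t\<^sup>x x\<^sup>j k(x) dx\<close>, \<open>j \<le> 2\<close>; so all of them
  are \<open>O(1/t\<^sup>2)\<close> and integrable. Fourier inversion then gives a bounded continuous density \<open>f\<close>,
  and integrating by parts three times shows that \<open>x\<^sup>3 f(x)\<close> is, up to a constant factor,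
  the inverse transform of \<open>\<phi>'''\<close>, hence bounded as well.\<close>

section \<open>Fourier inversion on the real line\<close>

lemma norm_iexp_diff_le: "cmod (iexp a - iexp b) \<le> \<bar>a - b\<bar>"
proof -
  have "iexp a - iexp b = iexp b * (iexp (a - b) - 1)"
    by (simp add: algebra_simps flip: exp_add)
  then have "cmod (iexp a - iexp b) = cmod (iexp (a - b) - 1)"
    by (simp add: norm_mult)
  also have "\<dots> \<le> \<bar>a - b\<bar>" using iexp_approx1[of "a - b" 0] by simp
  finally show ?thesis .
qed

lemma has_vector_derivative_iff_tendsto_quotient:
  fixes f :: "real \<Rightarrow> 'a::real_normed_vector"
  shows "(f has_vector_derivative D) (at x) \<longleftrightarrow> ((\<lambda>y. (f y - f x) /\<^sub>R (y - x)) \<longlongrightarrow> D) (at x)"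
proof -
  have quotient_eq: "norm ((f y - f x) /\<^sub>R (y - x) - D)
      = norm ((1 / norm (y - x)) *\<^sub>R (f y - (f x + (y - x) *\<^sub>R D)))" if "y \<noteq> x" for y
  proof -
    have "(f y - f x) /\<^sub>R (y - x) - D = (1 / (y - x)) *\<^sub>R (f y - (f x + (y - x) *\<^sub>R D))"
      using that by (simp add: scaleR_diff_right scaleR_add_right divide_inverse diff_diff_eq)
    then show ?thesis using that by (simp add: abs_divide)
  qed
  have "((\<lambda>y. (f y - f x) /\<^sub>R (y - x)) \<longlongrightarrow> D) (at x)
      \<longleftrightarrow> ((\<lambda>y. norm ((f y - f x) /\<^sub>R (y - x) - D)) \<longlongrightarrow> 0) (at x)"
    by (simp add: LIM_zero_iff tendsto_norm_zero_iff)
  also have "\<dots> \<longleftrightarrow> ((\<lambda>y. (1 / norm (y - x)) *\<^sub>R (f y - (f x + (y - x) *\<^sub>R D))) \<longlongrightarrow> 0) (at x)"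
    by (subst tendsto_norm_zero_iff[symmetric], intro filterlim_cong refl)
       (auto simp: eventually_at_filter quotient_eq)
  finally show ?thesis
    unfolding has_vector_derivative_def has_derivative_within
    using bounded_linear_scaleR_left by auto
qed

lemma has_vector_derivative_iexp_linear:
  "((\<lambda>x. iexp (-(t * x)) * c) has_vector_derivative (- (\<i> * t) * iexp (-(t * x)) * c))
     (at x within S)"
proof -
  have "((\<lambda>z. exp (\<i> * (- (of_real t * z))) * c) has_field_derivative
          (- (\<i> * t) * exp (\<i> * (- (of_real t * of_real x))) * c)) (at (of_real x))"
    by (auto intro!: derivative_eq_intros simp: algebra_simps)
  from has_vector_derivative_real_field[OF this]
  show ?thesis by (simp add: has_vector_derivative_at_within)
qed

lemma integrable_iexp_mult:
  fixes g :: "real \<Rightarrow> complex" and h :: "real \<Rightarrow> real"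
  assumes g: "integrable lborel g" and h: "h \<in> borel_measurable borel"
  shows "integrable lborel (\<lambda>t. iexp (h t) * g t)"
proof (rule Bochner_Integration.integrable_bound[OF g])
  show "(\<lambda>t. iexp (h t) * g t) \<in> borel_measurable lborel" using g h by auto
  show "AE t in lborel. norm (iexp (h t) * g t) \<le> norm (g t)"
    by (intro AE_I2) (simp add: norm_mult)
qed

text \<open>The difference quotients are dominated by \<open>\<bar>x w x\<bar>\<close>, since
  \<open>\<bar>(e\<^sup>i\<^sup>s\<^sup>x - e\<^sup>i\<^sup>t\<^sup>x)/(s - t)\<bar> \<le> \<bar>x\<bar>\<close>.\<close>
lemma has_vector_derivative_integral_iexp:
  fixes w :: "real \<Rightarrow> real" and c :: complex
  assumes w: "w \<in> borel_measurable borel"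
    and int: "\<And>s. integrable lborel (\<lambda>x. (iexp (s * x) - c) * w x)"
    and int_moment: "integrable lborel (\<lambda>x. x * w x)"
  shows "((\<lambda>s. \<integral>x. (iexp (s * x) - c) * w x \<partial>lborel) has_vector_derivative
           (\<integral>x. \<i> * iexp (t * x) * (x * w x) \<partial>lborel)) (at t)"
proof -
  let ?I = "\<lambda>s. \<integral>x. (iexp (s * x) - c) * w x \<partial>lborel"
  let ?q = "\<lambda>s x. (iexp (s * x) - iexp (t * x)) / of_real (s - t)"
  have quotient_tendsto: "(\<lambda>n. ?q (X n) x) \<longlonglongrightarrow> \<i> * iexp (t * x) * x"
    if "\<forall>i. X i \<in> UNIV - {t}" "X \<longlonglongrightarrow> t" for X x
  proof -
    have "((\<lambda>s::complex. exp (\<i> * (s * x))) has_field_derivative \<i> * iexp (t * x) * x)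
            (at (of_real t))"
      by (auto intro!: derivative_eq_intros simp: algebra_simps)
    from has_vector_derivative_real_field[OF this]
    have "((\<lambda>s. iexp (s * x)) has_vector_derivative \<i> * iexp (t * x) * x) (at t)"
      by simp
    then have "((\<lambda>s. ?q s x) \<longlongrightarrow> \<i> * iexp (t * x) * x) (at t)"
      unfolding has_vector_derivative_iff_tendsto_quotient
      by (simp add: scaleR_conv_of_real divide_inverse mult.commute)
    with that show ?thesis
      unfolding tendsto_at_iff_sequentially by (auto simp: o_def)
  qed
  have quotient_bound: "norm (?q s x * w x) \<le> \<bar>x * w x\<bar>" if "s \<noteq> t" for s x
  proof -
    have "cmod (iexp (s * x) - iexp (t * x)) \<le> \<bar>s - t\<bar> * \<bar>x\<bar>"
      using norm_iexp_diff_le[of "s * x" "t * x"] by (simp add: abs_mult flip: left_diff_distrib)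
    then have "cmod (?q s x) \<le> \<bar>x\<bar>"
      using that by (simp add: norm_divide divide_le_eq mult.commute flip: of_real_diff)
    then show ?thesis
      unfolding norm_mult abs_mult norm_of_real by (intro mult_right_mono) auto
  qed
  have quotient_eq: "(?I s - ?I t) /\<^sub>R (s - t) = (\<integral>x. ?q s x * w x \<partial>lborel)" for s
  proof -
    have "?I s - ?I t = (\<integral>x. (iexp (s * x) - c) * w x - (iexp (t * x) - c) * w x \<partial>lborel)"
      using int by (simp add: Bochner_Integration.integral_diff)
    also have "\<dots> = (\<integral>x. (iexp (s * x) - iexp (t * x)) * w x \<partial>lborel)"
      by (simp add: algebra_simps)
    finally have "?I s - ?I t = (\<integral>x. (iexp (s * x) - iexp (t * x)) * w x \<partial>lborel)" .
    then show ?thesis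
      by (simp add: scaleR_conv_of_real divide_inverse ac_simps flip: integral_mult_right_zero)
  qed
  show ?thesis
    unfolding has_vector_derivative_iff_tendsto_quotient tendsto_at_iff_sequentially o_def quotient_eq
  proof (intro allI impI)
    fix X :: "nat \<Rightarrow> real"
    assume X: "\<forall>i. X i \<in> UNIV - {t}" "X \<longlonglongrightarrow> t"
    show "(\<lambda>n. \<integral>x. ?q (X n) x * w x \<partial>lborel) \<longlonglongrightarrow> (\<integral>x. \<i> * iexp (t * x) * (x * w x) \<partial>lborel)"
    proof (rule integral_dominated_convergence[where w="\<lambda>x. \<bar>x * w x\<bar>"])
      show "AE x in lborel. (\<lambda>n. ?q (X n) x * w x) \<longlonglongrightarrow> \<i> * iexp (t * x) * (x * w x)"
        using tendsto_mult_right[OF quotient_tendsto[OF X]] by (simp add: mult.assoc)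
      show "AE x in lborel. norm (?q (X n) x * w x) \<le> \<bar>x * w x\<bar>" for n
        using X quotient_bound by auto
    qed (use w int_moment in auto)
  qed
qed

lemma continuous_on_integral_bounded_kernel:
  fixes g :: "real \<Rightarrow> complex" and k :: "real \<Rightarrow> real \<Rightarrow> complex"
  assumes g: "integrable lborel g"
    and k_cont: "\<And>s. continuous_on UNIV (\<lambda>x. k x s)"
    and k_meas: "\<And>x. k x \<in> borel_measurable borel"
    and k_bound: "\<And>x s. cmod (k x s) \<le> 1"
  shows "continuous_on UNIV (\<lambda>x. \<integral>s. k x s * g s \<partial>lborel)"
proof (intro continuous_at_imp_continuous_on ballI)
  fix x0 :: real
  show "isCont (\<lambda>x. \<integral>s. k x s * g s \<partial>lborel) x0"
    unfolding continuous_at_sequentially o_def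
  proof (intro allI impI)
    fix X :: "nat \<Rightarrow> real" assume X: "X \<longlonglongrightarrow> x0"
    show "(\<lambda>n. \<integral>s. k (X n) s * g s \<partial>lborel) \<longlonglongrightarrow> (\<integral>s. k x0 s * g s \<partial>lborel)"
    proof (rule integral_dominated_convergence[where w="\<lambda>s. norm (g s)"])
      show "AE s in lborel. (\<lambda>n. k (X n) s * g s) \<longlonglongrightarrow> k x0 s * g s"
      proof (intro AE_I2 tendsto_mult tendsto_const)
        fix s
        have "isCont (\<lambda>x. k x s) x0"
          using k_cont[of s] by (simp add: continuous_on_eq_continuous_at)
        then show "(\<lambda>n. k (X n) s) \<longlonglongrightarrow> k x0 s"
          using X unfolding continuous_at_sequentially by (auto simp: o_def)
      qed
      show "AE s in lborel. norm (k (X n) s * g s) \<le> norm (g s)" for n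
        using k_bound by (intro AE_I2) (auto simp: norm_mult intro: mult_left_le_one_le)
    qed (use g k_meas in auto)
  qed
qed

lemma tendsto_integral_indicator_exhausting:
  fixes g :: "real \<Rightarrow> 'b::{banach, second_countable_topology}"
  assumes g: "integrable lborel g"
    and A: "\<And>n. A n \<in> sets borel" and exhaust: "\<And>t. \<forall>\<^sub>F n in sequentially. t \<in> A n"
  shows "(\<lambda>n. \<integral>t. indicator (A n) t *\<^sub>R g t \<partial>lborel) \<longlonglongrightarrow> (\<integral>t. g t \<partial>lborel)"
proof (rule integral_dominated_convergence[where w="\<lambda>t. norm (g t)"])
  show "AE t in lborel. (\<lambda>n. indicator (A n) t *\<^sub>R g t) \<longlonglongrightarrow> g t"
  proof (intro AE_I2 tendsto_eventually)
    fix t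
    show "\<forall>\<^sub>F n in sequentially. indicator (A n) t *\<^sub>R g t = g t"
      using exhaust[of t] by eventually_elim simp
  qed
  show "AE t in lborel. norm (indicator (A n) t *\<^sub>R g t) \<le> norm (g t)" for n
    by (intro AE_I2) (auto simp: indicator_def)
qed (use g A in auto)

lemma eventually_in_symmetric_interval:
  "\<forall>\<^sub>F n in sequentially. t \<in> {- real n<..<real n}"
proof -
  obtain N :: nat where "\<bar>t\<bar> < real N" using reals_Archimedean2 by blast
  then show ?thesis
    unfolding eventually_sequentially by (intro exI[of _ N]) auto
qed

lemma integral_indicator_iexp:
  fixes a b t :: real and c :: complex
  assumes "a \<le> b" "t \<noteq> 0"
  shows "(\<integral>x. indicator {a..b} x *\<^sub>R (iexp (-(t * x)) * c) \<partial>lborel)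
       = (iexp (-(t * a)) - iexp (-(t * b))) / (\<i> * t) * c"
proof -
  let ?F = "\<lambda>x. iexp (-(t * x)) * c / (- (\<i> * t))"
  have "(\<integral>x. indicator {a..b} x *\<^sub>R (iexp (-(t * x)) * c) \<partial>lborel) = ?F b - ?F a"
  proof (rule integral_FTC_atLeastAtMost[OF assms(1)])
    fix x
    show "(?F has_vector_derivative iexp (-(t * x)) * c) (at x within {a..b})"
      using has_vector_derivative_iexp_linear[of t "c / (- (\<i> * t))" x] assms(2)
      by (simp add: field_simps)
  qed (intro continuous_intros)
  also have "\<dots> = (iexp (-(t * a)) - iexp (-(t * b))) / (\<i> * t) * c"
    using assms(2) by (simp add: field_simps)
  finally show ?thesis .
qed

lemma (in real_distribution) measure_Ioc_eq_integral_char: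
  fixes a b :: real
  assumes int: "integrable lborel (char M)"
    and ab: "a \<le> b" and null_a: "measure M {a} = 0" and null_b: "measure M {b} = 0"
  defines "G \<equiv> \<lambda>t. (iexp (-(t * a)) - iexp (-(t * b))) / (\<i> * t)"
  shows "integrable lborel (\<lambda>t. G t * char M t)"
    and "2 * pi * measure M {a<..b} = (\<integral>t. G t * char M t \<partial>lborel)"
proof -
  have G_meas: "G \<in> borel_measurable borel" unfolding G_def by measurable
  have G_bound: "cmod (G t) \<le> b - a" for t
    using Levy_Inversion_aux2[of "-b" "-a" t] ab by (cases "t = 0") (auto simp: G_def mult.commute)
  show int_G: "integrable lborel (\<lambda>t. G t * char M t)"
  proof (rule Bochner_Integration.integrable_bound[of _ "\<lambda>t. of_real (b - a) * char M t"])
    show "AE t in lborel. norm (G t * char M t) \<le> norm (of_real (b - a) * char M t)"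
      using G_bound ab
      by (intro AE_I2) (auto simp del: of_real_diff simp: norm_mult intro!: mult_right_mono)
  qed (use int G_meas in auto)
  have "(\<lambda>n. \<integral>t. indicator {- real n<..<real n} t *\<^sub>R (G t * char M t) \<partial>lborel)
          \<longlonglongrightarrow> (\<integral>t. G t * char M t \<partial>lborel)"
    by (intro tendsto_integral_indicator_exhausting int_G eventually_in_symmetric_interval) auto
  moreover have "(\<lambda>n::nat. \<integral>t. indicator {- real n<..<real n} t *\<^sub>R (G t * char M t) \<partial>lborel)
          \<longlonglongrightarrow> 2 * pi * measure M {a<..b}"
  proof -
    have "einterval (- ereal (real n)) (ereal (real n)) = {- real n<..<real n}" for n
      by (auto simp: einterval_def)
    then have "(CLBINT t=- real n..real n. G t * char M t)
             = (\<integral>t. indicator {- real n<..<real n} t *\<^sub>R (G t * char M t) \<partial>lborel)" for n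
      by (simp add: interval_lebesgue_integral_def set_lebesgue_integral_def)
    with tendsto_mult_left[OF Levy_Inversion[OF ab null_a null_b], of "2 * pi"]
    show ?thesis by (simp add: G_def)
  qed
  ultimately show "2 * pi * measure M {a<..b} = (\<integral>t. G t * char M t \<partial>lborel)"
    by (rule LIMSEQ_unique[rotated])
qed

text \<open>The kernel of the inversion formula is \<open>\<integral>\<^bsub>[a,b]\<^esub> e\<^sup>-\<^sup>i\<^sup>t\<^sup>x dx\<close>; exchange the integrals.\<close>
lemma (in real_distribution) measure_Ioc_eq_integral_inverse_char:
  fixes a b :: real
  assumes int: "integrable lborel (char M)"
    and ab: "a \<le> b" and null_a: "measure M {a} = 0" and null_b: "measure M {b} = 0"
  defines "H \<equiv> \<lambda>x. \<integral>t. iexp (-(t * x)) * char M t \<partial>lborel"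
  shows "measure M {a<..b} = (\<integral>x. indicator {a..b} x * (Re (H x) / (2 * pi)) \<partial>lborel)"
proof -
  define h where "h x t = indicator {a..b} x *\<^sub>R (iexp (-(t * x)) * char M t)" for x t
  note inversion = measure_Ioc_eq_integral_char[OF int ab null_a null_b]
  have int_h: "integrable (lborel \<Otimes>\<^sub>M lborel) (\<lambda>(x, t). h x t)"
  proof (rule lborel_pair.Fubini_integrable)
    have "norm (h x t) = indicator {a..b} x * norm (char M t)" for x t
      by (simp add: h_def norm_mult indicator_def)
    then show "integrable lborel (\<lambda>x. \<integral>t. norm (case (x, t) of (x, t) \<Rightarrow> h x t) \<partial>lborel)"
      by (simp add: emeasure_lborel_Icc_eq)
    have "integrable lborel (\<lambda>t. iexp (-(t * x)) * char M t)" for x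
      by (rule integrable_iexp_mult[OF int]) measurable
    then show "AE x in lborel. integrable lborel (\<lambda>t. case (x, t) of (x, t) \<Rightarrow> h x t)"
      by (auto simp: h_def intro!: integrable_scaleR_right)
  qed (simp add: h_def)
  have "2 * pi * measure M {a<..b} = (\<integral>t. \<integral>x. h x t \<partial>lborel \<partial>lborel)"
    unfolding inversion(2)
  proof (rule integral_cong_AE)
    show "AE t in lborel. (iexp (-(t * a)) - iexp (-(t * b))) / (\<i> * t) * char M t
        = (\<integral>x. h x t \<partial>lborel)"
      using AE_lborel_singleton[of 0]
      by eventually_elim (unfold h_def, rule integral_indicator_iexp[OF ab, symmetric])
  qed (use inversion(1) in \<open>auto simp: h_def\<close>)
  also have "\<dots> = (\<integral>x. \<integral>t. h x t \<partial>lborel \<partial>lborel)"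
    by (rule lborel_pair.Fubini_integral[OF int_h])
  finally have "2 * pi * measure M {a<..b} = Re (\<integral>x. \<integral>t. h x t \<partial>lborel \<partial>lborel)"
    by (metis Re_complex_of_real)
  also have "\<dots> = (\<integral>x. indicator {a..b} x * Re (H x) \<partial>lborel)"
    using integral_Re[OF lborel_pair.integrable_fst'[OF int_h]] by (simp add: h_def H_def)
  finally have "2 * pi * measure M {a<..b} = (\<integral>x. indicator {a..b} x * Re (H x) \<partial>lborel)" .
  moreover have "(\<integral>x. indicator {a..b} x * (Re (H x) / (2 * pi)) \<partial>lborel)
      = (\<integral>x. indicator {a..b} x * Re (H x) \<partial>lborel) / (2 * pi)"
    by (simp only: times_divide_eq_right integral_divide_zero)
  ultimately show ?thesis by (simp add: field_simps)
qed

context real_distribution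
begin

lemma exists_null_point_between:
  assumes "u < v"
  obtains x where "u < x" "x < v" "measure M {x} = 0"
proof -
  have "countable {x. measure M {x} \<noteq> 0}" by (rule countable_support)
  from open_minus_countable[OF this, of "{u<..<v}"] assms that show ?thesis by auto
qed

context
  fixes f :: "real \<Rightarrow> real" and B :: real
  assumes f_cont: "continuous_on UNIV f" and f_bound: "\<And>x. \<bar>f x\<bar> \<le> B"
    and measure_Ioc: "\<And>a b. a \<le> b \<Longrightarrow> measure M {a} = 0 \<Longrightarrow> measure M {b} = 0 \<Longrightarrow>
        measure M {a<..b} = (\<integral>x. indicator {a..b} x * f x \<partial>lborel)"
begin

lemma integrable_indicator_Icc_mult: "integrable lborel (\<lambda>x. indicator {a..b} x * f x)"
proof (rule Bochner_Integration.integrable_bound[of _ "\<lambda>x. indicator {a..b} x * B"])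
  show "(\<lambda>x. indicator {a..b} x * f x) \<in> borel_measurable lborel"
    using borel_measurable_continuous_onI[OF f_cont] by simp
  show "AE x in lborel. norm (indicator {a..b} x * f x) \<le> norm (indicator {a..b} x * B)"
    using f_bound by (intro AE_I2) (auto simp: indicator_def intro: order.trans[OF _ abs_ge_self])
qed (simp add: emeasure_lborel_Icc_eq)

lemma measure_Ioc_le:
  assumes "a \<le> b" "measure M {a} = 0" "measure M {b} = 0" "\<And>y. a \<le> y \<Longrightarrow> y \<le> b \<Longrightarrow> f y \<le> c"
  shows "measure M {a<..b} \<le> c * (b - a)"
proof -
  have "measure M {a<..b} \<le> (\<integral>x. indicator {a..b} x * c \<partial>lborel)"
    unfolding measure_Ioc[OF assms(1-3)]
  proof (rule integral_mono)
    show "integrable lborel (\<lambda>x. indicator {a..b} x * c)" by (simp add: emeasure_lborel_Icc_eq)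
    show "integrable lborel (\<lambda>x. indicator {a..b} x * f x)" by (rule integrable_indicator_Icc_mult)
  qed (auto simp: indicator_def assms(4))
  then show ?thesis using assms(1) by (simp add: mult.commute)
qed

lemma nonneg_of_measure_Ioc: "0 \<le> f x"
proof (rule ccontr)
  assume neg: "\<not> 0 \<le> f x"
  have "isCont f x" using f_cont by (simp add: continuous_on_eq_continuous_at)
  then have "\<forall>\<^sub>F y in at x. f y < f x / 2"
    using neg by (intro order_tendstoD(2)) (auto simp: isCont_def)
  then obtain d where "d > 0" "\<And>y. y \<noteq> x \<Longrightarrow> dist y x < d \<Longrightarrow> f y < f x / 2"
    unfolding eventually_at by blast
  moreover have "f x < f x / 2" using neg by simp
  ultimately have d: "d > 0" "\<And>y. dist y x < d \<Longrightarrow> f y < f x / 2"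
    by (metis dist_self)+
  obtain a where a: "x - d < a" "a < x" "measure M {a} = 0"
    using exists_null_point_between[of "x - d" x] d by auto
  obtain b where b: "x < b" "b < x + d" "measure M {b} = 0"
    using exists_null_point_between[of x "x + d"] d by auto
  have "measure M {a<..b} \<le> f x / 2 * (b - a)"
    using a b by (intro measure_Ioc_le less_imp_le d(2)) (auto simp: dist_real_def)
  also have "\<dots> < 0" using a b neg by (intro mult_neg_pos) auto
  finally show False by simp
qed

lemma measure_singleton_eq_0: "measure M {x} = 0"
proof (rule ccontr)
  assume "measure M {x} \<noteq> 0"
  then have pos: "measure M {x} > 0" using measure_nonneg[of M "{x}"] by linarith
  have B: "0 \<le> B" using f_bound[of 0] by simp
  define e where "e = measure M {x} / (4 * (B + 1))"
  have e: "e > 0" using pos B by (simp add: e_def)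
  obtain a where a: "x - e < a" "a < x" "measure M {a} = 0"
    using exists_null_point_between[of "x - e" x] e by auto
  obtain b where b: "x < b" "b < x + e" "measure M {b} = 0"
    using exists_null_point_between[of x "x + e"] e by auto
  have "measure M {x} \<le> measure M {a<..b}"
    using a b by (intro finite_measure_mono) auto
  also have "\<dots> \<le> B * (b - a)"
    using a b f_bound by (intro measure_Ioc_le) (auto simp: abs_le_iff)
  also have "\<dots> \<le> (B + 1) * (2 * e)"
    using a b B by (intro mult_mono) auto
  also have "\<dots> = measure M {x} / 2"
    using B by (simp add: e_def field_simps)
  finally show False using pos by simp
qed

lemma eq_density_of_measure_Ioc: "M = density lborel (\<lambda>x. ennreal (f x))"
proof -
  let ?D = "density lborel (\<lambda>x. ennreal (f x))"
  let ?E = "range (\<lambda>(a, b). {a<..b::real})"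
  have f_meas: "f \<in> borel_measurable borel" by (rule borel_measurable_continuous_onI[OF f_cont])
  have "emeasure M {a<..b} = emeasure ?D {a<..b}" if "a \<le> b" for a b
  proof -
    have "emeasure ?D {a<..b} = (\<integral>\<^sup>+ x. ennreal (f x) * indicator {a<..b} x \<partial>lborel)"
      using f_meas by (subst emeasure_density) auto
    also have "\<dots> = (\<integral>\<^sup>+ x. ennreal (indicator {a..b} x * f x) \<partial>lborel)"
      using AE_lborel_singleton[of a]
      by (intro nn_integral_cong_AE) (auto elim!: eventually_mono simp: indicator_def)
    also have "\<dots> = ennreal (\<integral>x. indicator {a..b} x * f x \<partial>lborel)"
      using nonneg_of_measure_Ioc
      by (intro nn_integral_eq_integral integrable_indicator_Icc_mult AE_I2) auto
    also have "\<dots> = emeasure M {a<..b}"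
      using that measure_Ioc measure_singleton_eq_0 by (simp add: emeasure_eq_measure)
    finally show ?thesis ..
  qed
  then have eq: "emeasure M X = emeasure ?D X" if "X \<in> ?E" for X
    using that by (cases "X = {}") (auto simp: not_le)
  have borel: "sets borel = sigma_sets UNIV ?E"
    by (subst borel_sigma_sets_Ioc) (simp add: sets_measure_of)
  show ?thesis
  proof (rule measure_eqI_generator_eq[where \<Omega>=UNIV and E="?E" and A="\<lambda>i. {- real i<..real i}"])
    show "Int_stable ?E" by (auto simp: Int_stable_def)
    show "sets M = sigma_sets UNIV ?E" using borel by (simp add: events_eq_borel)
    show "sets ?D = sigma_sets UNIV ?E" using borel by simp
    show "range (\<lambda>i. {- real i<..real i}) \<subseteq> ?E" by auto
    show "(\<Union>i. {- real i<..real i}) = UNIV" by (rule UN_Ioc_eq_UNIV)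
    show "emeasure M {- real i<..real i} \<noteq> \<infinity>" for i by (simp add: emeasure_eq_measure)
  qed (use eq in auto)
qed

end

end

lemma norm_integral_iexp_mult_le:
  "norm (\<integral>t. iexp (-(t * x)) * h t \<partial>lborel) \<le> (\<integral>t. norm (h t) \<partial>lborel)"
  by (rule order.trans[OF integral_norm_bound]) (simp add: norm_mult)

lemma (in real_distribution) density_inverse_char:
  assumes int: "integrable lborel (char M)"
  defines "f \<equiv> \<lambda>x. Re (\<integral>t. iexp (-(t * x)) * char M t \<partial>lborel) / (2 * pi)"
  shows "M = density lborel (\<lambda>x. ennreal (f x))" "\<And>x. 0 \<le> f x" "continuous_on UNIV f"
    "\<And>x. \<bar>f x\<bar> \<le> (\<integral>t. norm (char M t) \<partial>lborel) / (2 * pi)"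
proof -
  have "continuous_on UNIV (\<lambda>x. \<integral>t. iexp (-(t * x)) * char M t \<partial>lborel)"
    by (rule continuous_on_integral_bounded_kernel[OF int])
       (auto intro!: continuous_intros simp: norm_mult)
  then show f_cont: "continuous_on UNIV f"
    unfolding f_def by (intro continuous_intros) auto
  show f_bound: "\<bar>f x\<bar> \<le> (\<integral>t. norm (char M t) \<partial>lborel) / (2 * pi)" for x
  proof -
    have "\<bar>Re (\<integral>t. iexp (-(t * x)) * char M t \<partial>lborel)\<bar> \<le> (\<integral>t. norm (char M t) \<partial>lborel)"
      by (rule order.trans[OF abs_Re_le_cmod norm_integral_iexp_mult_le])
    then show ?thesis by (simp add: f_def abs_divide divide_right_mono)
  qed
  have measure_Ioc: "measure M {a<..b} = (\<integral>x. indicator {a..b} x * f x \<partial>lborel)"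
    if "a \<le> b" "measure M {a} = 0" "measure M {b} = 0" for a b
    using measure_Ioc_eq_integral_inverse_char[OF int that] unfolding f_def .
  show "0 \<le> f x" for x
    by (rule nonneg_of_measure_Ioc[OF f_cont f_bound measure_Ioc])
  show "M = density lborel (\<lambda>x. ennreal (f x))"
    by (rule eq_density_of_measure_Ioc[OF f_cont f_bound measure_Ioc])
qed

lemma integrable_if_norm_le_inverse_1_plus_square:
  fixes h :: "real \<Rightarrow> 'b::{banach, second_countable_topology}"
  assumes "h \<in> borel_measurable borel" "\<And>t. norm (h t) \<le> B / (1 + t^2)"
  shows "integrable lborel h"
proof (rule Bochner_Integration.integrable_bound)
  have "integrable lborel (\<lambda>x::real. inverse (1 + x^2))"
    using integrable_inverse_1_plus_square by (simp add: set_integrable_def einterval_def)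
  then show "integrable lborel (\<lambda>t. B / (1 + t^2))" by (simp add: divide_inverse)
  show "AE t in lborel. norm (h t) \<le> norm (B / (1 + t^2))"
    by (intro AE_I2 order.trans[OF assms(2)]) (simp only: real_norm_def abs_ge_self)
qed (use assms(1) in simp)

lemma integral_derivative_eq_0:
  fixes P P' :: "real \<Rightarrow> complex"
  assumes deriv: "\<And>t. (P has_vector_derivative P' t) (at t)"
    and cont: "continuous_on UNIV P'" and int: "integrable lborel P'"
    and decay: "\<And>t. norm (P t) \<le> B / (1 + t^2)"
  shows "(\<integral>t. P' t \<partial>lborel) = 0"
proof -
  have FTC: "(\<integral>t. indicator {- real n<..<real n} t *\<^sub>R P' t \<partial>lborel) = P (real n) - P (- real n)"
    for n :: nat
  proof -
    have "(\<integral>t. indicator {- real n<..<real n} t *\<^sub>R P' t \<partial>lborel)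
        = (\<integral>t. indicator {- real n..real n} t *\<^sub>R P' t \<partial>lborel)"
    proof (rule integral_cong_AE)
      show "AE t in lborel. indicator {- real n<..<real n} t *\<^sub>R P' t
          = indicator {- real n..real n} t *\<^sub>R P' t"
        using AE_lborel_singleton[of "real n"] AE_lborel_singleton[of "- real n"]
        by eventually_elim (auto simp: indicator_def)
    qed (use borel_measurable_continuous_onI[OF cont] in auto)
    also have "\<dots> = P (real n) - P (- real n)"
      by (rule integral_FTC_atLeastAtMost)
         (auto intro: has_vector_derivative_at_within[OF deriv] continuous_on_subset[OF cont])
    finally show ?thesis .
  qed
  have "(\<lambda>n. \<integral>t. indicator {- real n<..<real n} t *\<^sub>R P' t \<partial>lborel) \<longlonglongrightarrow> (\<integral>t. P' t \<partial>lborel)"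
    by (intro tendsto_integral_indicator_exhausting int eventually_in_symmetric_interval) auto
  then have "(\<lambda>n::nat. P (real n) - P (- real n)) \<longlonglongrightarrow> (\<integral>t. P' t \<partial>lborel)"
    by (simp only: FTC)
  moreover have "(\<lambda>n::nat. P (real n) - P (- real n)) \<longlonglongrightarrow> 0"
  proof (rule Lim_null_comparison)
    have B: "0 \<le> B" using decay[of 0] norm_ge_zero[of "P 0"] by (simp del: norm_ge_zero)
    show "\<forall>\<^sub>F n in sequentially. norm (P (real n) - P (- real n)) \<le> 2 * B * inverse (real (Suc n))"
    proof (intro always_eventually allI)
      fix n :: nat
      have "1 + real n \<le> 1 + (real n)^2" by (cases n) (auto simp: power2_eq_square)
      then have "B / (1 + (real n)^2) \<le> B * inverse (real (Suc n))"
        using B by (simp add: divide_inverse le_imp_inverse_le mult_left_mono add.commute)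
      moreover have "norm (P (real n) - P (- real n)) \<le> B / (1 + (real n)^2) + B / (1 + (real n)^2)"
        using decay[of "real n"] decay[of "- real n"] norm_triangle_ineq4[of "P (real n)" "P (- real n)"]
        by simp
      ultimately show "norm (P (real n) - P (- real n)) \<le> 2 * B * inverse (real (Suc n))"
        by simp
    qed
    show "(\<lambda>n. 2 * B * inverse (real (Suc n))) \<longlonglongrightarrow> 0"
      by (intro tendsto_mult_right_zero LIMSEQ_inverse_real_of_nat)
  qed
  ultimately show ?thesis by (rule LIMSEQ_unique)
qed

lemma integral_iexp_mult_derivative:
  fixes h h' :: "real \<Rightarrow> complex" and x B :: real
  assumes h_deriv: "\<And>t. (h has_vector_derivative h' t) (at t)"
    and h'_cont: "continuous_on UNIV h'"
    and h_decay: "\<And>t. norm (h t) \<le> B / (1 + t^2)"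
    and h'_decay: "\<And>t. norm (h' t) \<le> B / (1 + t^2)"
  shows "(\<integral>t. iexp (-(t * x)) * h' t \<partial>lborel) = \<i> * x * (\<integral>t. iexp (-(t * x)) * h t \<partial>lborel)"
proof -
  have h_cont: "continuous_on UNIV h"
    using h_deriv by (auto intro!: continuous_at_imp_continuous_on has_vector_derivative_continuous)
  have int_h: "integrable lborel (\<lambda>t. iexp (-(x * t)) * h t)"
    by (rule integrable_iexp_mult[OF integrable_if_norm_le_inverse_1_plus_square
          [OF borel_measurable_continuous_onI[OF h_cont] h_decay]]) measurable
  have int_h': "integrable lborel (\<lambda>t. iexp (-(x * t)) * h' t)"
    by (rule integrable_iexp_mult[OF integrable_if_norm_le_inverse_1_plus_square
          [OF borel_measurable_continuous_onI[OF h'_cont] h'_decay]]) measurable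
  define P' where "P' t = iexp (-(x * t)) * 1 * h' t + (- (\<i> * x) * iexp (-(x * t)) * 1) * h t" for t
  have "(\<integral>t. P' t \<partial>lborel) = 0"
  proof (rule integral_derivative_eq_0)
    show "((\<lambda>t. iexp (-(x * t)) * 1 * h t) has_vector_derivative P' t) (at t)" for t
      unfolding P'_def by (rule has_vector_derivative_mult[OF has_vector_derivative_iexp_linear h_deriv])
    show "continuous_on UNIV P'"
      unfolding P'_def by (intro continuous_intros h_cont h'_cont)
    show "integrable lborel P'"
      unfolding P'_def using int_h int_h' by (auto simp: mult.assoc)
    show "norm (iexp (-(x * t)) * 1 * h t) \<le> B / (1 + t^2)" for t
      using h_decay[of t] by (simp add: norm_mult)
  qed
  moreover have "(\<integral>t. P' t \<partial>lborel)
      = (\<integral>t. iexp (-(x * t)) * h' t \<partial>lborel) - \<i> * x * (\<integral>t. iexp (-(x * t)) * h t \<partial>lborel)"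
  proof -
    have "(\<integral>t. P' t \<partial>lborel)
        = (\<integral>t. iexp (-(x * t)) * h' t + (- (\<i> * x)) * (iexp (-(x * t)) * h t) \<partial>lborel)"
      unfolding P'_def by (simp add: mult.assoc)
    also have "\<dots> = (\<integral>t. iexp (-(x * t)) * h' t \<partial>lborel)
        + (- (\<i> * x)) * (\<integral>t. iexp (-(x * t)) * h t \<partial>lborel)"
      using int_h int_h' by (simp add: Bochner_Integration.integral_add)
    finally show ?thesis by simp
  qed
  ultimately show ?thesis by (simp add: mult.commute)
qed

lemma integral_iexp_mult_higher_derivative:
  fixes h :: "nat \<Rightarrow> real \<Rightarrow> complex"
  assumes deriv: "\<And>j t. j < n \<Longrightarrow> (h j has_vector_derivative h (Suc j) t) (at t)"
    and cont: "\<And>j. j \<le> n \<Longrightarrow> continuous_on UNIV (h j)"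
    and decay: "\<And>j t. j \<le> n \<Longrightarrow> norm (h j t) \<le> B / (1 + t^2)"
  shows "(\<integral>t. iexp (-(t * x)) * h n t \<partial>lborel) = (\<i> * x) ^ n * (\<integral>t. iexp (-(t * x)) * h 0 t \<partial>lborel)"
  using assms
proof (induction n)
  case (Suc n)
  have "(\<integral>t. iexp (-(t * x)) * h (Suc n) t \<partial>lborel) = \<i> * x * (\<integral>t. iexp (-(t * x)) * h n t \<partial>lborel)"
    using Suc.prems by (intro integral_iexp_mult_derivative[where B = B]) auto
  with Suc show ?case by simp
qed simp

lemma bounded_range_mult_power_le:
  fixes f :: "real \<Rightarrow> real"
  assumes "bounded (range f)" "bounded (range (\<lambda>x. x ^ n * f x))" "k \<le> n"
  shows "bounded (range (\<lambda>x. x ^ k * f x))"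
proof -
  obtain B C where B: "\<And>x. \<bar>f x\<bar> \<le> B" and C: "\<And>x. \<bar>x ^ n * f x\<bar> \<le> C"
    using assms(1,2) unfolding bounded_iff by fastforce
  have "\<bar>x ^ k * f x\<bar> \<le> B + C" for x
  proof (cases "\<bar>x\<bar> \<le> 1")
    case True
    then have "\<bar>x ^ k * f x\<bar> \<le> 1 * \<bar>f x\<bar>"
      unfolding abs_mult power_abs by (intro mult_right_mono power_le_one) auto
    then show ?thesis using B[of x] C[of x] by linarith
  next
    case False
    then have "\<bar>x ^ k * f x\<bar> \<le> \<bar>x ^ n * f x\<bar>"
      unfolding abs_mult power_abs using assms(3) by (intro mult_right_mono power_increasing) auto
    then show ?thesis using B[of x] C[of x] by linarith
  qed
  then show ?thesis unfolding bounded_iff by (intro exI[of _ "B + C"]) auto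
qed

text \<open>\<open>x\<^sup>n f(x)\<close> is the inverse Fourier transform of the \<open>n\<close>-th derivative of the characteristic
  function.\<close>
lemma (in real_distribution) bounded_density_of_char_derivatives:
  fixes h :: "nat \<Rightarrow> real \<Rightarrow> complex"
  assumes char: "char M = h 0"
    and deriv: "\<And>j t. j < n \<Longrightarrow> (h j has_vector_derivative h (Suc j) t) (at t)"
    and cont: "\<And>j. j \<le> n \<Longrightarrow> continuous_on UNIV (h j)"
    and decay: "\<And>j t. j \<le> n \<Longrightarrow> norm (h j t) \<le> B / (1 + t^2)"
  obtains f where "f \<in> borel_measurable borel" "\<And>x. 0 \<le> f x"
    "M = density lborel (\<lambda>x. ennreal (f x))"
    "bounded (range f)" "bounded (range (\<lambda>x. x ^ n * f x))"
proof -
  have int: "integrable lborel (char M)"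
    unfolding char using cont decay
    by (intro integrable_if_norm_le_inverse_1_plus_square borel_measurable_continuous_onI) auto
  define f where "f x = Re (\<integral>t. iexp (-(t * x)) * char M t \<partial>lborel) / (2 * pi)" for x
  note density = density_inverse_char[OF int, folded f_def]
  have "\<bar>x ^ n * f x\<bar> \<le> (\<integral>t. norm (h n t) \<partial>lborel) / (2 * pi)" for x
  proof -
    let ?I = "\<integral>t. iexp (-(t * x)) * h 0 t \<partial>lborel"
    have "\<bar>x ^ n * f x\<bar> = \<bar>x\<bar> ^ n * \<bar>Re ?I\<bar> / (2 * pi)"
      by (simp add: f_def char abs_mult power_abs)
    also have "\<dots> \<le> \<bar>x\<bar> ^ n * norm ?I / (2 * pi)"
      by (intro divide_right_mono mult_left_mono abs_Re_le_cmod) auto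
    also have "\<dots> = norm ((\<i> * x) ^ n * ?I) / (2 * pi)"
      by (simp add: norm_mult norm_power)
    also have "\<dots> = norm (\<integral>t. iexp (-(t * x)) * h n t \<partial>lborel) / (2 * pi)"
      by (subst integral_iexp_mult_higher_derivative[where B = B]) (use deriv cont decay in auto)
    also have "\<dots> \<le> (\<integral>t. norm (h n t) \<partial>lborel) / (2 * pi)"
      by (intro divide_right_mono norm_integral_iexp_mult_le) auto
    finally show ?thesis .
  qed
  then have "bounded (range (\<lambda>x. x ^ n * f x))"
    unfolding bounded_iff by auto
  moreover have "bounded (range f)"
    unfolding bounded_iff using density(4) by auto
  ultimately show ?thesis
    using that density(1-3) borel_measurable_continuous_onI by blast
qed

section \<open>The tail function of the Levy measure\<close>

lemma integrable_indicator_one_minus_cos_div: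
  fixes a b T :: real
  assumes "0 < a"
  shows "integrable lborel (\<lambda>x. indicator {a..b} x * ((1 - cos (T * x)) / x))"
proof -
  have "integrable lborel (\<lambda>x. (1 - cos (T * x)) / x * indicator {a..b} x)"
    using assms by (intro borel_integrable_atLeastAtMost) (auto intro!: continuous_intros)
  then show ?thesis by (simp add: mult.commute)
qed

text \<open>\<open>G(x) = ln x - sin(Tx)/(Tx) + 1/(Tx)\<close> is an antiderivative of a lower bound for
  \<open>(1 - cos(Tx))/x\<close>.\<close>
lemma ln_minus_1_le_integral_one_minus_cos_div:
  fixes T \<delta> :: real
  assumes T: "0 < T" and T\<delta>: "1 \<le> T * \<delta>"
  shows "ln (T * \<delta>) - 1 \<le> (\<integral>x. indicator {1/T..\<delta>} x * ((1 - cos (T * x)) / x) \<partial>lborel)"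
proof -
  define G where "G x = ln x - sin (T * x) / (T * x) + 1 / (T * x)" for x
  define G' where "G' x = (1 - cos (T * x)) / x + (sin (T * x) - 1) / (T * x^2)" for x
  have pos: "0 < x" if "x \<in> {1/T..\<delta>}" for x
    using that T by (auto intro: less_le_trans[of 0 "1/T"])
  have "1 / T \<le> \<delta>" using T T\<delta> by (simp add: divide_le_eq mult.commute)
  then have "(\<integral>x. indicator {1/T..\<delta>} x *\<^sub>R G' x \<partial>lborel) = G \<delta> - G (1/T)"
  proof (rule integral_FTC_atLeastAtMost)
    fix x assume "1/T \<le> x" "x \<le> \<delta>"
    then have x: "0 < x" using pos by auto
    have "(G has_real_derivative 1 / x - ((cos (T * x) * T) * (T * x) - sin (T * x) * T) / (T * x)^2
        + (- T / (T * x)^2)) (at x)"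
      unfolding G_def using T x by (auto intro!: derivative_eq_intros simp: power2_eq_square)
    also have "1 / x - ((cos (T * x) * T) * (T * x) - sin (T * x) * T) / (T * x)^2 + (- T / (T * x)^2)
        = G' x"
      using T x by (simp add: G'_def field_simps power2_eq_square)
    finally show "(G has_vector_derivative G' x) (at x within {1/T..\<delta>})"
      by (simp add: has_real_derivative_iff_has_vector_derivative has_vector_derivative_at_within)
  next
    show "continuous_on {1/T..\<delta>} G'"
      unfolding G'_def using T pos by (intro continuous_intros) auto
  qed
  moreover have "ln (T * \<delta>) - 1 \<le> G \<delta> - G (1/T)"
  proof -
    have "0 < \<delta>" using zero_less_mult_pos[of T \<delta>] T T\<delta> by simp
    then have "G \<delta> - G (1/T) = ln (T * \<delta>) + (1 - sin (T * \<delta>)) / (T * \<delta>) + sin 1 - 1"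
      using T by (simp add: G_def ln_mult ln_div field_simps)
    moreover have "0 \<le> (1 - sin (T * \<delta>)) / (T * \<delta>)"
      using sin_le_one[of "T * \<delta>"] T\<delta> by simp
    moreover have "0 \<le> sin (1::real)" using sin_gt_zero[of 1] pi_gt3 by simp
    ultimately show ?thesis by linarith
  qed
  moreover have "(\<integral>x. indicator {1/T..\<delta>} x * G' x \<partial>lborel)
      \<le> (\<integral>x. indicator {1/T..\<delta>} x * ((1 - cos (T * x)) / x) \<partial>lborel)"
  proof (intro integral_mono)
    show "integrable lborel (\<lambda>x. indicator {1/T..\<delta>} x * ((1 - cos (T * x)) / x))"
      using T by (intro integrable_indicator_one_minus_cos_div) auto
    have "isCont G' x" if "x \<in> {1/T..\<delta>}" for x
      unfolding G'_def using pos[OF that] T by (auto intro!: continuous_intros)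
    then show "integrable lborel (\<lambda>x. indicator {1/T..\<delta>} x * G' x)"
      by (auto simp: mult.commute intro!: borel_integrable_atLeastAtMost)
    have "(sin (T * x) - 1) / (T * x^2) \<le> 0" for x
      using sin_le_one[of "T * x"] T by (intro divide_nonpos_nonneg) auto
    then show "indicator {1/T..\<delta>} x * G' x \<le> indicator {1/T..\<delta>} x * ((1 - cos (T * x)) / x)" for x
      by (intro mult_left_mono) (auto simp: G'_def)
  qed
  ultimately show ?thesis by simp
qed

lemma measure_Ioi_inverse_Suc_tendsto_1:
  fixes M :: "real measure"
  assumes "prob_space M" and sets: "sets M = sets borel" and nonpos: "measure M {..0} = 0"
  shows "(\<lambda>n. measure M {1 / real (Suc n)<..}) \<longlonglongrightarrow> 1"
proof -
  interpret prob_space M by fact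
  define A where "A n = {1 / real (Suc n)<..}" for n
  have "incseq A"
    unfolding incseq_def A_def
  proof (intro allI impI subsetI)
    fix m n :: nat and x :: real assume "m \<le> n" "x \<in> {1 / real (Suc m)<..}"
    moreover have "1 / real (Suc n) \<le> 1 / real (Suc m)" using \<open>m \<le> n\<close> by (simp add: frac_le)
    ultimately show "x \<in> {1 / real (Suc n)<..}" by simp
  qed
  then have "(\<lambda>n. measure M (A n)) \<longlonglongrightarrow> measure M (\<Union>n. A n)"
    by (intro finite_Lim_measure_incseq \<open>incseq A\<close>) (auto simp: A_def sets)
  moreover have "(\<Union>n. A n) = {0<..}"
  proof (intro equalityI subsetI)
    fix x :: real assume "x \<in> {0<..}"
    then obtain n where "inverse (real (Suc n)) < x" using reals_Archimedean by auto
    then show "x \<in> (\<Union>n. A n)" by (auto simp: A_def divide_inverse)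
  next
    fix x :: real assume "x \<in> (\<Union>n. A n)"
    then obtain n where "1 / real (Suc n) < x" by (auto simp: A_def)
    moreover have "0 < 1 / real (Suc n)" by simp
    ultimately show "x \<in> {0<..}" by (simp only: greaterThan_iff)
  qed
  moreover have "measure M {0<..} = 1"
  proof -
    have "measure M ({..0} \<union> {0<..}) = measure M {..0} + measure M {0<..}"
      by (rule finite_measure_Union) (auto simp: sets)
    moreover have "{..0} \<union> {0<..} = space M"
      using sets_eq_imp_space_eq[OF sets] by auto
    ultimately show ?thesis using nonpos prob_space by simp
  qed
  ultimately show ?thesis by (simp add: A_def)
qed

locale levy_tail =
  fixes \<alpha> \<epsilon> :: real and F :: "real measure"
  assumes F_prob: "prob_space F" and F_sets: "sets F = sets borel"
    and F_pos: "measure F {..0} = 0"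
    and eps: "\<epsilon> > 0"
    and tail_integrable: "set_integrable lborel {0..}
                   (\<lambda>x. max 1 (\<bar>x\<bar> powr (2 + \<epsilon>)) * tailk \<alpha> F x)"
    and alpha: "2 < \<alpha>"
begin

abbreviation k :: "real \<Rightarrow> real" where "k \<equiv> tailk \<alpha> F"

lemma tail_eq_0_if_neg: "x < 0 \<Longrightarrow> k x = 0"
  by (simp add: tailk_def)

lemma tail_nonneg: "0 \<le> k x"
  using alpha by (simp add: tailk_def)

lemma tail_div_nonneg: "0 \<le> k x / x"
  using tail_nonneg[of x] tail_eq_0_if_neg[of x] by (cases "x < 0") auto

lemma integrable_weighted_tail:
  "integrable lborel (\<lambda>x. max 1 (\<bar>x\<bar> powr (2 + \<epsilon>)) * k x)"
proof -
  have "(\<lambda>x. indicator {0..} x *\<^sub>R (max 1 (\<bar>x\<bar> powr (2 + \<epsilon>)) * k x))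
      = (\<lambda>x. max 1 (\<bar>x\<bar> powr (2 + \<epsilon>)) * k x)"
  proof (rule ext)
    fix x
    show "indicator {0..} x *\<^sub>R (max 1 (\<bar>x\<bar> powr (2 + \<epsilon>)) * k x)
        = max 1 (\<bar>x\<bar> powr (2 + \<epsilon>)) * k x"
      using tail_eq_0_if_neg[of x] by (cases "0 \<le> x") auto
  qed
  then show ?thesis using tail_integrable by (simp add: set_integrable_def)
qed

lemma borel_measurable_tail: "k \<in> borel_measurable borel"
proof -
  have "k = (\<lambda>x. (max 1 (\<bar>x\<bar> powr (2 + \<epsilon>)) * k x) / max 1 (\<bar>x\<bar> powr (2 + \<epsilon>)))"
    by auto
  also have "\<dots> \<in> borel_measurable borel"
    using borel_measurable_integrable[OF integrable_weighted_tail] by measurable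
  finally show ?thesis .
qed

lemma integrable_power_mult_tail:
  assumes "j \<le> 2"
  shows "integrable lborel (\<lambda>x. x ^ j * k x)"
proof (rule Bochner_Integration.integrable_bound[OF integrable_weighted_tail])
  show "AE x in lborel. norm (x ^ j * k x) \<le> norm (max 1 (\<bar>x\<bar> powr (2 + \<epsilon>)) * k x)"
  proof (intro AE_I2)
    fix x :: real
    show "norm (x ^ j * k x) \<le> norm (max 1 (\<bar>x\<bar> powr (2 + \<epsilon>)) * k x)"
    proof (cases "x < 0")
      case False
      have "x ^ j \<le> max 1 (\<bar>x\<bar> powr (2 + \<epsilon>))"
      proof (cases "x \<le> 1")
        case True
        then show ?thesis using False by (simp add: power_le_one le_max_iff_disj)
      next
        case False
        then have "x ^ j \<le> x powr 2"
          using assms by (simp add: powr_realpow power_increasing)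
        also have "\<dots> \<le> x powr (2 + \<epsilon>)" using False eps by (intro powr_mono) auto
        finally show ?thesis using False by simp
      qed
      then show ?thesis
        using False tail_nonneg[of x] by (simp add: abs_mult mult_right_mono)
    qed (simp add: tail_eq_0_if_neg)
  qed
qed (use borel_measurable_tail in auto)

lemma integrable_tail: "integrable lborel k"
  using integrable_power_mult_tail[of 0] by simp

text \<open>\<open>\<alpha> > 2\<close> enters here: the tail \<open>k = \<alpha> F((x,\<infinity>))\<close> tends to \<open>\<alpha>\<close> as \<open>x \<rightarrow> 0\<^sup>+\<close>.\<close>
lemma tail_ge_2_near_0: "\<exists>\<delta>>0. \<forall>x. 0 \<le> x \<longrightarrow> x \<le> \<delta> \<longrightarrow> 2 \<le> k x"
proof -
  interpret prob_space F by (rule F_prob)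
  define A where "A n = {1 / real (Suc n)<..}" for n
  have "(\<lambda>n. measure F (A n)) \<longlonglongrightarrow> 1"
    unfolding A_def using F_prob F_sets F_pos by (rule measure_Ioi_inverse_Suc_tendsto_1)
  moreover have "2 / \<alpha> < 1" using alpha by simp
  ultimately have "\<forall>\<^sub>F n in sequentially. 2 / \<alpha> < measure F (A n)"
    by (rule order_tendstoD(1))
  then obtain n where n: "2 / \<alpha> < measure F (A n)"
    by (auto simp: eventually_sequentially)
  show ?thesis
  proof (intro exI[of _ "1 / real (Suc n)"] conjI allI impI)
    fix x :: real assume x: "0 \<le> x" "x \<le> 1 / real (Suc n)"
    have "measure F (A n) \<le> measure F {x<..}"
      using x by (intro finite_measure_mono) (auto simp: A_def F_sets)
    then have "2 / \<alpha> < measure F {x<..}" using n by simp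
    then have "2 < measure F {x<..} * \<alpha>"
      using alpha by (simp add: pos_divide_less_eq)
    then show "2 \<le> k x" using x by (simp add: tailk_def mult.commute)
  qed simp
qed

definition levy_exponent :: "real \<Rightarrow> complex" where
  "levy_exponent t = (\<integral>x. (iexp (t * x) - 1) * (k x / x) \<partial>lborel)"

definition tail_transform :: "nat \<Rightarrow> real \<Rightarrow> complex" where
  "tail_transform j t = (\<integral>x. iexp (t * x) * (x ^ j * k x) \<partial>lborel)"

definition tail_moment :: "nat \<Rightarrow> real" where
  "tail_moment j = (\<integral>x. \<bar>x ^ j * k x\<bar> \<partial>lborel)"

lemma integrable_levy_integrand:
  "integrable lborel (\<lambda>x. (iexp (t * x) - 1) * (k x / x))"
proof (rule Bochner_Integration.integrable_bound[of _ "\<lambda>x. (\<bar>t\<bar> + 2) * k x"])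
  show "AE x in lborel. norm ((iexp (t * x) - 1) * (k x / x)) \<le> norm ((\<bar>t\<bar> + 2) * k x)"
  proof (intro AE_I2)
    fix x :: real
    have "cmod (iexp (t * x) - 1) * (k x / x) \<le> (\<bar>t\<bar> + 2) * k x" if x: "0 < x"
    proof (cases "x \<le> 1")
      case True
      have "cmod (iexp (t * x) - 1) * (k x / x) \<le> \<bar>t\<bar> * x * (k x / x)"
        using norm_iexp_diff_le[of "t * x" 0] x tail_div_nonneg[of x]
        by (intro mult_right_mono) (auto simp: abs_mult)
      also have "\<dots> \<le> (\<bar>t\<bar> + 2) * k x" using x tail_nonneg[of x] by (simp add: mult_right_mono)
      finally show ?thesis .
    next
      case False
      have "cmod (iexp (t * x) - 1) \<le> 2"
        using norm_triangle_ineq4[of "iexp (t * x)" 1] by simp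
      moreover have "k x / x \<le> k x"
        using False tail_nonneg[of x] by (simp add: divide_le_eq mult_le_cancel_left1)
      ultimately have "cmod (iexp (t * x) - 1) * (k x / x) \<le> 2 * k x"
        using tail_div_nonneg[of x] by (intro mult_mono) auto
      also have "\<dots> \<le> (\<bar>t\<bar> + 2) * k x" using tail_nonneg[of x] by (simp add: mult_right_mono)
      finally show ?thesis .
    qed
    moreover have "k x / x = 0" if "x \<le> 0"
      using that tail_eq_0_if_neg[of x] by (cases "x = 0") auto
    ultimately show "norm ((iexp (t * x) - 1) * (k x / x)) \<le> norm ((\<bar>t\<bar> + 2) * k x)"
      using tail_nonneg[of x] tail_div_nonneg[of x]
      by (cases "x \<le> 0") (auto simp: norm_mult simp del: of_real_divide)
  qed
qed (use integrable_tail borel_measurable_tail in auto)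


lemma phipi_eq_exp_levy_exponent: "phipi \<alpha> F t = exp (levy_exponent t)"
proof -
  have "k x / x = 0" if "x \<le> 0" for x
    using that tail_eq_0_if_neg[of x] by (cases "x = 0") auto
  then have "set_lebesgue_integral lborel {0<..} (\<lambda>x. (iexp (t * x) - 1) * (k x / x)) = levy_exponent t"
    unfolding set_lebesgue_integral_def levy_exponent_def
    by (intro Bochner_Integration.integral_cong) (auto simp: indicator_def not_less)
  then show ?thesis by (simp add: phipi_def)
qed

lemma levy_exponent_has_vector_derivative:
  "(levy_exponent has_vector_derivative \<i> * tail_transform 0 t) (at t)"
proof -
  have meas: "(\<lambda>x. k x / x) \<in> borel_measurable borel" using borel_measurable_tail by measurable
  have "integrable lborel (\<lambda>x. x * (k x / x))"
  proof (rule Bochner_Integration.integrable_bound[OF integrable_tail])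
    show "AE x in lborel. norm (x * (k x / x)) \<le> norm (k x)"
      by (intro AE_I2) (auto simp: tail_nonneg)
  qed (use meas in measurable)
  from has_vector_derivative_integral_iexp[OF meas integrable_levy_integrand this]
  have "(levy_exponent has_vector_derivative (\<integral>x. \<i> * iexp (t * x) * (x * (k x / x)) \<partial>lborel)) (at t)"
    unfolding levy_exponent_def[abs_def] .
  moreover have "(\<integral>x. \<i> * iexp (t * x) * (x * (k x / x)) \<partial>lborel) = \<i> * tail_transform 0 t"
    unfolding tail_transform_def integral_mult_right_zero[symmetric]
  proof (rule integral_cong_AE)
    show "AE x in lborel. \<i> * iexp (t * x) * (x * (k x / x)) = \<i> * (iexp (t * x) * (x ^ 0 * k x))"
      using AE_lborel_singleton[of 0] by eventually_elim simp
  qed (use meas borel_measurable_tail in auto)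
  ultimately show ?thesis by simp
qed

lemma integrable_complex_power_mult_tail:
  "j \<le> 2 \<Longrightarrow> integrable lborel (\<lambda>x. complex_of_real (x ^ j * k x))"
  by (subst complex_of_real_integrable_eq) (rule integrable_power_mult_tail)

lemma integrable_tail_transform_integrand:
  "j \<le> 2 \<Longrightarrow> integrable lborel (\<lambda>x. iexp (t * x) * (x ^ j * k x))"
  by (rule integrable_iexp_mult[OF integrable_complex_power_mult_tail]) auto

lemma tail_transform_has_vector_derivative:
  assumes "j < 2"
  shows "(tail_transform j has_vector_derivative \<i> * tail_transform (Suc j) t) (at t)"
proof -
  have "((\<lambda>s. \<integral>x. (iexp (s * x) - 0) * (x ^ j * k x) \<partial>lborel) has_vector_derivative
          (\<integral>x. \<i> * iexp (t * x) * (x * (x ^ j * k x)) \<partial>lborel)) (at t)"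
  proof (rule has_vector_derivative_integral_iexp)
    show "(\<lambda>x. x ^ j * k x) \<in> borel_measurable borel"
      using borel_measurable_tail by measurable
    show "integrable lborel (\<lambda>x. x * (x ^ j * k x))"
      using assms integrable_power_mult_tail[of "Suc j"] by (simp add: mult.assoc)
  qed (use assms integrable_tail_transform_integrand in simp)
  moreover have "(\<integral>x. \<i> * iexp (t * x) * (x * (x ^ j * k x)) \<partial>lborel) = \<i> * tail_transform (Suc j) t"
    by (simp add: tail_transform_def mult.assoc flip: integral_mult_right_zero)
  ultimately show ?thesis by (simp add: tail_transform_def[abs_def])
qed

lemma norm_tail_transform_le: "norm (tail_transform j t) \<le> tail_moment j"
  unfolding tail_transform_def tail_moment_def
  by (rule order.trans[OF integral_norm_bound]) (simp add: norm_mult del: of_real_mult of_real_power)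

lemma tail_moment_nonneg: "0 \<le> tail_moment j"
  by (simp add: tail_moment_def)

lemma continuous_on_tail_transform:
  assumes "j \<le> 2" shows "continuous_on UNIV (tail_transform j)"
  unfolding tail_transform_def[abs_def]
  by (rule continuous_on_integral_bounded_kernel[OF integrable_complex_power_mult_tail[OF assms]])
     (auto intro!: continuous_intros)

lemma integrable_Re_levy_integrand: "integrable lborel (\<lambda>x. (cos (t * x) - 1) * (k x / x))"
  using integrable_Re[OF integrable_levy_integrand[of t]] by (simp add: Re_exp del: of_real_divide)

lemma Re_levy_exponent: "Re (levy_exponent t) = (\<integral>x. (cos (t * x) - 1) * (k x / x) \<partial>lborel)"
proof -
  have "Re (levy_exponent t) = (\<integral>x. Re ((iexp (t * x) - 1) * (k x / x)) \<partial>lborel)"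
    unfolding levy_exponent_def by (rule integral_Re[OF integrable_levy_integrand, symmetric])
  then show ?thesis by (simp add: Re_exp del: of_real_divide)
qed

lemma Re_levy_integrand_nonpos: "(cos (t * x) - 1) * (k x / x) \<le> 0"
  using tail_div_nonneg[of x] cos_le_one[of "t * x"] by (intro mult_nonpos_nonneg) auto

lemma Re_levy_exponent_nonpos: "Re (levy_exponent t) \<le> 0"
proof -
  have "0 \<le> (\<integral>x. - ((cos (t * x) - 1) * (k x / x)) \<partial>lborel)"
    using Re_levy_integrand_nonpos by (intro integral_nonneg_AE AE_I2) (simp add: neg_0_le_iff_le)
  then show ?thesis by (simp add: Re_levy_exponent)
qed

text \<open>Since \<open>k \<ge> 2\<close> on \<open>[0, \<delta>]\<close>, \<open>-Re \<psi>(t) \<ge> 2 \<integral>\<^bsub>1/|t|\<^esub>\<^sup>\<delta> (1 - cos(tx))/x dx \<ge> 2 ln(|t|\<delta>) - 2\<close>.\<close>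
lemma Re_levy_exponent_le_log:
  obtains \<delta> where "\<delta> > 0" "\<And>t. 1 \<le> \<bar>t\<bar> * \<delta> \<Longrightarrow> Re (levy_exponent t) \<le> 2 - 2 * ln (\<bar>t\<bar> * \<delta>)"
proof -
  obtain \<delta> where \<delta>: "\<delta> > 0" "\<And>x. 0 \<le> x \<Longrightarrow> x \<le> \<delta> \<Longrightarrow> 2 \<le> k x"
    using tail_ge_2_near_0 by blast
  have "Re (levy_exponent t) \<le> 2 - 2 * ln (\<bar>t\<bar> * \<delta>)" if t\<delta>: "1 \<le> \<bar>t\<bar> * \<delta>" for t
  proof -
    define T where "T = \<bar>t\<bar>"
    have T: "0 < T" using t\<delta> \<delta>(1) by (cases "t = 0") (auto simp: T_def)
    let ?g = "\<lambda>x. indicator {1/T..\<delta>} x * ((1 - cos (T * x)) / x)"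
    have "2 * (ln (T * \<delta>) - 1) \<le> 2 * (\<integral>x. ?g x \<partial>lborel)"
      using ln_minus_1_le_integral_one_minus_cos_div[OF T, of \<delta>] t\<delta> by (simp add: T_def)
    also have "\<dots> = (\<integral>x. 2 * ?g x \<partial>lborel)"
      by (rule integral_mult_right_zero[symmetric])
    also have "\<dots> \<le> (\<integral>x. - ((cos (t * x) - 1) * (k x / x)) \<partial>lborel)"
    proof (rule integral_mono)
      show "integrable lborel (\<lambda>x. 2 * ?g x)"
        using T by (intro integrable_mult_right integrable_indicator_one_minus_cos_div) auto
      show "integrable lborel (\<lambda>x. - ((cos (t * x) - 1) * (k x / x)))"
        using integrable_Re_levy_integrand by simp
      fix x :: real
      have cos: "cos (t * x) = cos (T * x)"
        unfolding T_def by (cases "0 \<le> t") auto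
      show "2 * ?g x \<le> - ((cos (t * x) - 1) * (k x / x))"
      proof (cases "x \<in> {1/T..\<delta>}")
        case True
        then have x: "0 < x" using T by (auto intro: less_le_trans[of 0 "1/T"])
        then have "2 \<le> k x" using True \<delta>(2) by auto
        then have "(1 - cos (T * x)) * (2 / x) \<le> (1 - cos (T * x)) * (k x / x)"
          using x by (intro mult_left_mono divide_right_mono) auto
        moreover have "2 * ?g x = (1 - cos (T * x)) * (2 / x)" using True by simp
        moreover have "- ((cos (t * x) - 1) * (k x / x)) = (1 - cos (T * x)) * (k x / x)"
          by (simp only: cos minus_diff_eq flip: mult_minus_left)
        ultimately show ?thesis by linarith
      qed (use Re_levy_integrand_nonpos in simp)
    qed
    also have "\<dots> = - Re (levy_exponent t)"
      by (simp add: Re_levy_exponent)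
    finally show ?thesis by (simp add: T_def)
  qed
  with \<delta>(1) that show ?thesis by blast
qed


lemma norm_exp_levy_exponent_le:
  obtains C where "\<And>t. norm (exp (levy_exponent t)) \<le> C / (1 + t^2)"
proof -
  obtain \<delta> where \<delta>: "\<delta> > 0" "\<And>t. 1 \<le> \<bar>t\<bar> * \<delta> \<Longrightarrow> Re (levy_exponent t) \<le> 2 - 2 * ln (\<bar>t\<bar> * \<delta>)"
    using Re_levy_exponent_le_log by blast
  define C where "C = exp 2 * (1 + 1 / \<delta>^2)"
  have "norm (exp (levy_exponent t)) \<le> C / (1 + t^2)" for t
  proof (cases "1 \<le> \<bar>t\<bar> * \<delta>")
    case True
    have u: "0 < \<bar>t\<bar> * \<delta>" using True by linarith
    have u2: "(\<bar>t\<bar> * \<delta>)^2 = t^2 * \<delta>^2" by (simp add: power_mult_distrib)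
    have "1 \<le> (\<bar>t\<bar> * \<delta>)^2" using True by (simp add: one_le_power)
    then have t\<delta>: "1 \<le> t^2 * \<delta>^2" by (simp only: u2)
    have "norm (exp (levy_exponent t)) = exp (Re (levy_exponent t))" by (simp add: norm_exp_eq_Re)
    also have "\<dots> \<le> exp (2 - 2 * ln (\<bar>t\<bar> * \<delta>))" using \<delta>(2)[OF True] by simp
    also have "\<dots> = exp 2 / (t^2 * \<delta>^2)"
      using u by (simp only: exp_diff mult_2 exp_add exp_ln flip: power2_eq_square u2)
    also have "\<dots> \<le> C / (1 + t^2)"
    proof -
      have "(1 + 1 / \<delta>^2) * (t^2 * \<delta>^2) = t^2 * \<delta>^2 + t^2"
        using \<delta>(1) by (simp add: field_simps)
      then have "1 + t^2 \<le> (1 + 1 / \<delta>^2) * (t^2 * \<delta>^2)"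
        using t\<delta> by linarith
      then have "exp 2 * (1 + t^2) \<le> C * (t^2 * \<delta>^2)"
        unfolding C_def by (simp add: mult.assoc)
      moreover have "0 < t^2 * \<delta>^2" "0 < 1 + t^2"
        using t\<delta> by (linarith, simp add: add_pos_nonneg)
      ultimately show ?thesis
        by (simp add: divide_simps)
    qed
    finally show ?thesis .
  next
    case False
    then have "\<bar>t\<bar> \<le> 1 / \<delta>" using \<delta>(1) by (simp add: field_simps)
    then have "t^2 \<le> 1 / \<delta>^2" by (metis abs_ge_zero power2_abs power_mono power_one_over)
    then have "1 + t^2 \<le> C"
      unfolding C_def using one_le_exp_iff[of 2] \<delta>(1)
      by (smt (verit) mult_le_cancel_right1 zero_le_divide_1_iff zero_le_power2)
    then have "1 \<le> C / (1 + t^2)" by (simp add: add_pos_nonneg)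
    moreover have "norm (exp (levy_exponent t)) \<le> 1"
      using Re_levy_exponent_nonpos[of t] by (simp add: norm_exp_eq_Re)
    ultimately show ?thesis by linarith
  qed
  then show ?thesis by (rule that)
qed

subsection \<open>The characteristic function and its derivatives\<close>

definition \<phi> :: "real \<Rightarrow> complex" where
  "\<phi> t = exp (levy_exponent t)"

definition \<phi>' :: "real \<Rightarrow> complex" where
  "\<phi>' t = \<i> * tail_transform 0 t * \<phi> t"

definition \<phi>'' :: "real \<Rightarrow> complex" where
  "\<phi>'' t = \<i> * tail_transform 0 t * \<phi>' t - tail_transform 1 t * \<phi> t"

definition \<phi>''' :: "real \<Rightarrow> complex" where
  "\<phi>''' t = \<i> * tail_transform 0 t * \<phi>'' t - 2 * tail_transform 1 t * \<phi>' t
    - \<i> * tail_transform 2 t * \<phi> t"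

lemma \<phi>_has_vector_derivative: "(\<phi> has_vector_derivative \<phi>' t) (at t)"
proof -
  have "((exp \<circ> levy_exponent) has_vector_derivative (\<i> * tail_transform 0 t * exp (levy_exponent t))) (at t)"
    by (rule field_vector_diff_chain_at[OF levy_exponent_has_vector_derivative DERIV_exp])
  then show ?thesis by (simp add: \<phi>_def[abs_def] \<phi>'_def o_def)
qed

lemma tail_transform_0_has_vector_derivative:
  "(tail_transform 0 has_vector_derivative \<i> * tail_transform 1 t) (at t)"
  using tail_transform_has_vector_derivative[of 0] by simp

lemma tail_transform_1_has_vector_derivative:
  "(tail_transform 1 has_vector_derivative \<i> * tail_transform 2 t) (at t)"
  using tail_transform_has_vector_derivative[of 1] by (simp add: numeral_2_eq_2)

lemma \<phi>'_has_vector_derivative: "(\<phi>' has_vector_derivative \<phi>'' t) (at t)"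
proof -
  have deriv: "((\<lambda>t. \<i> * tail_transform 0 t * \<phi> t) has_vector_derivative
      \<i> * tail_transform 0 t * \<phi>' t + \<i> * (\<i> * tail_transform 1 t) * \<phi> t) (at t)"
    by (intro has_vector_derivative_mult has_vector_derivative_mult_right
        tail_transform_0_has_vector_derivative \<phi>_has_vector_derivative)
  show ?thesis
    unfolding \<phi>'_def[abs_def] by (rule has_vector_derivative_eq_rhs[OF deriv]) (simp add: \<phi>''_def)
qed

lemma \<phi>''_has_vector_derivative: "(\<phi>'' has_vector_derivative \<phi>''' t) (at t)"
proof -
  have deriv: "((\<lambda>t. \<i> * tail_transform 0 t * \<phi>' t - tail_transform 1 t * \<phi> t) has_vector_derivative
      (\<i> * tail_transform 0 t * \<phi>'' t + \<i> * (\<i> * tail_transform 1 t) * \<phi>' t)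
      - (tail_transform 1 t * \<phi>' t + \<i> * tail_transform 2 t * \<phi> t)) (at t)"
    by (intro has_vector_derivative_diff has_vector_derivative_mult has_vector_derivative_mult_right
        tail_transform_0_has_vector_derivative tail_transform_1_has_vector_derivative
        \<phi>_has_vector_derivative \<phi>'_has_vector_derivative)
  show ?thesis
    unfolding \<phi>''_def[abs_def]
    by (rule has_vector_derivative_eq_rhs[OF deriv]) (simp add: \<phi>'''_def algebra_simps)
qed

lemma continuous_on_\<phi>''': "continuous_on UNIV \<phi>'''"
proof -
  have "continuous_on UNIV f" if "\<And>t. (f has_vector_derivative f' t) (at t)" for f f'
    using that by (auto intro!: continuous_at_imp_continuous_on has_vector_derivative_continuous)
  then show ?thesis
    unfolding \<phi>'''_def[abs_def] using \<phi>_has_vector_derivative \<phi>'_has_vector_derivative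
      \<phi>''_has_vector_derivative
    by (intro continuous_intros continuous_on_tail_transform) auto
qed

lemma norm_\<phi>'_le: "norm (\<phi>' t) \<le> tail_moment 0 * norm (\<phi> t)"
  using norm_tail_transform_le[of 0 t] by (simp add: \<phi>'_def norm_mult mult_right_mono)

lemma norm_\<phi>''_le: "norm (\<phi>'' t) \<le> (tail_moment 0 ^ 2 + tail_moment 1) * norm (\<phi> t)"
proof -
  have "norm (\<phi>'' t) \<le> norm (tail_transform 0 t) * norm (\<phi>' t) + norm (tail_transform 1 t) * norm (\<phi> t)"
    unfolding \<phi>''_def by (rule order.trans[OF norm_triangle_ineq4]) (simp add: norm_mult)
  also have "\<dots> \<le> tail_moment 0 * (tail_moment 0 * norm (\<phi> t)) + tail_moment 1 * norm (\<phi> t)"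
    by (intro add_mono mult_mono norm_tail_transform_le norm_\<phi>'_le tail_moment_nonneg order.refl) auto
  finally show ?thesis by (simp add: power2_eq_square algebra_simps)
qed

lemma norm_\<phi>'''_le:
  "norm (\<phi>''' t) \<le> (tail_moment 0 ^ 3 + 3 * tail_moment 0 * tail_moment 1 + tail_moment 2) * norm (\<phi> t)"
proof -
  have "norm (\<phi>''' t) \<le> norm (tail_transform 0 t) * norm (\<phi>'' t)
      + 2 * (norm (tail_transform 1 t) * norm (\<phi>' t)) + norm (tail_transform 2 t) * norm (\<phi> t)"
    unfolding \<phi>'''_def
    by (intro order.trans[OF norm_triangle_ineq4] add_mono order.trans[OF norm_triangle_ineq4])
       (auto simp: norm_mult)
  also have "\<dots> \<le> tail_moment 0 * ((tail_moment 0 ^ 2 + tail_moment 1) * norm (\<phi> t))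
      + 2 * (tail_moment 1 * (tail_moment 0 * norm (\<phi> t))) + tail_moment 2 * norm (\<phi> t)"
    by (intro add_mono mult_mono mult_left_mono norm_tail_transform_le norm_\<phi>'_le norm_\<phi>''_le
        tail_moment_nonneg order.refl) auto
  finally show ?thesis by (simp add: power2_eq_square power3_eq_cube algebra_simps)
qed

lemma \<phi>_derivatives_decay:
  obtains B where "\<And>t. norm (\<phi> t) \<le> B / (1 + t^2)" "\<And>t. norm (\<phi>' t) \<le> B / (1 + t^2)"
    "\<And>t. norm (\<phi>'' t) \<le> B / (1 + t^2)" "\<And>t. norm (\<phi>''' t) \<le> B / (1 + t^2)"
proof -
  obtain C where C: "\<And>t. norm (\<phi> t) \<le> C / (1 + t^2)"
    using norm_exp_levy_exponent_le unfolding \<phi>_def by blast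
  let ?m = tail_moment
  define c where "c = 1 + ?m 0 + (?m 0 ^ 2 + ?m 1) + (?m 0 ^ 3 + 3 * ?m 0 * ?m 1 + ?m 2)"
  have le_c: "norm z \<le> c * C / (1 + t^2)"
    if "norm z \<le> a * norm (\<phi> t)" "0 \<le> a" "a \<le> c" for z :: complex and a t
  proof -
    have "0 \<le> C / (1 + t^2)" using C[of t] norm_ge_zero[of "\<phi> t"] by linarith
    then have "a * norm (\<phi> t) \<le> c * (C / (1 + t^2))"
      using that(2,3) C[of t] by (intro mult_mono) auto
    then show ?thesis using that(1) by simp
  qed
  have "0 \<le> ?m 0 ^ 2 + ?m 1" "0 \<le> ?m 0 ^ 3 + 3 * ?m 0 * ?m 1 + ?m 2"
    using tail_moment_nonneg by auto
  then show ?thesis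
    using le_c[of "\<phi> _" 1] le_c[OF norm_\<phi>'_le] le_c[OF norm_\<phi>''_le] le_c[OF norm_\<phi>'''_le]
      tail_moment_nonneg[of 0] tail_moment_nonneg[of 1] tail_moment_nonneg[of 2]
    by (intro that[of "c * C"]) (auto simp: c_def)
qed

end

theorem lemmaL0:
  fixes \<alpha> lam \<epsilon> :: real and F \<pi> :: "real measure"
  assumes lam: "lam > 0"
    and F_prob: "prob_space F" and F_sets: "sets F = sets borel"
    and F_pos: "measure F {..0} = 0"
    and pi_prob: "prob_space \<pi>" and pi_sets: "sets \<pi> = sets borel"
    and pi_char: "\<And>t. char \<pi> t = phipi \<alpha> F t"
    and cond_i_eps: "\<epsilon> > 0"
    and cond_i: "set_integrable lborel {0..}
                   (\<lambda>x. max 1 (\<bar>x\<bar> powr (2 + \<epsilon>)) * tailk \<alpha> F x)"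
    and cond_ii: "tailk \<alpha> F 0 = \<alpha>" "2 < \<alpha>"
    and cond_iv: "\<exists>C. \<forall>u.
        norm (phik \<alpha> F u) \<le> C * (1 + \<bar>u\<bar>) powr (-1) \<and>
        norm (vector_derivative (phik \<alpha> F) (at u)) \<le> C * (1 + \<bar>u\<bar>) powr (-2) \<and>
        norm (vector_derivative (\<lambda>v. vector_derivative (phik \<alpha> F) (at v)) (at u))
          \<le> C * (1 + \<bar>u\<bar>) powr (-2)"
  shows "\<exists>f. f \<in> borel_measurable borel \<and> (\<forall>x. 0 \<le> f x) \<and>
           \<pi> = density lborel (\<lambda>x. ennreal (f x)) \<and>
           bounded (range f) \<and>
           bounded (range (\<lambda>x. x ^ 3 * f x)) \<and>
           bounded (range (\<lambda>x. x ^ 2 * f x))"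
proof -
  interpret levy_tail \<alpha> \<epsilon> F
    by (rule levy_tail.intro[OF F_prob F_sets F_pos cond_i_eps cond_i cond_ii(2)])
  interpret real_distribution \<pi>
    using pi_prob pi_sets by (simp add: real_distribution_def real_distribution_axioms_def)
  define h where "h j = [\<phi>, \<phi>', \<phi>'', \<phi>'''] ! j" for j
  obtain B where B: "\<And>t. norm (\<phi> t) \<le> B / (1 + t^2)" "\<And>t. norm (\<phi>' t) \<le> B / (1 + t^2)"
    "\<And>t. norm (\<phi>'' t) \<le> B / (1 + t^2)" "\<And>t. norm (\<phi>''' t) \<le> B / (1 + t^2)"
    by (rule \<phi>_derivatives_decay) auto
  have "char \<pi> = h 0"
    using pi_char by (auto simp: h_def \<phi>_def phipi_eq_exp_levy_exponent)
  moreover have "(h j has_vector_derivative h (Suc j) t) (at t)" if "j < 3" for j t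
    using that \<phi>_has_vector_derivative \<phi>'_has_vector_derivative \<phi>''_has_vector_derivative
    by (auto simp: h_def less_Suc_eq numeral_3_eq_3)
  moreover have "continuous_on UNIV (h j)" if "j \<le> 3" for j
    using that calculation(2)[THEN has_vector_derivative_continuous] continuous_on_\<phi>'''
    by (cases "j = 3") (auto intro!: continuous_at_imp_continuous_on simp: h_def)
  moreover have "norm (h j t) \<le> B / (1 + t^2)" if "j \<le> 3" for j t
    using that B by (auto simp: h_def le_Suc_eq numeral_3_eq_3)
  ultimately obtain f where "f \<in> borel_measurable borel" "\<And>x. 0 \<le> f x"
    "\<pi> = density lborel (\<lambda>x. ennreal (f x))" "bounded (range f)" "bounded (range (\<lambda>x. x ^ 3 * f x))"
    by (rule bounded_density_of_char_derivatives) blast+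
  moreover note bounded_range_mult_power_le[of f 3 2]
  ultimately show ?thesis by auto
qed

end
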